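(* Let $P=\{\mathbf{x}: A\mathbf{x}\le\mathbf{b}\}\subseteq[0,k]^n\subseteq\mathbb{R}^n$ be a $d$-dimensional lattice polytope with integral constraint matrix $A$. Then the monotone diameter of $P$ is at most $(d-1)\|A\|_{\infty}nk+1$.
   Context: A lattice polytope is a polytope whose vertices have integer coordinates. $\|A\|_\infty$ denotes the maximum absolute value of an entry of $A$. A $\mathbf{c}$-monotone path is a sequence of vertices of $P$ in which consecutive vertices are joined by an edge of $P$ and $\mathbf{c}^{\intercal}\mathbf{x}$ strictly increases; its length is its number of edges. The monotone diameter of $P$ is the maximum, over all generic linear objectives $\mathbf{c}$ (not constant on any edge) and all vertices $\mathbf{v}$, of the length of a shortest $\mathbf{c}$-monotone path from $\mathbf{v}$ to the $\mathbf{c}$-maximal vertex. *)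

theory Defs
  imports "HOL-Analysis.Analysis"
begin

definition vertex_of :: "real^'n \<Rightarrow> (real^'n) set \<Rightarrow> bool" where
  "vertex_of v P \<longleftrightarrow> v extreme_point_of P"

definition poly_edge :: "(real^'n) set \<Rightarrow> real^'n \<Rightarrow> real^'n \<Rightarrow> bool" where
  "poly_edge P u v \<longleftrightarrow> (convex hull {u, v}) face_of P \<and> aff_dim (convex hull {u, v}) = 1"

definition generic_obj :: "(real^'n) set \<Rightarrow> real^'n \<Rightarrow> bool" where
  "generic_obj P c \<longleftrightarrow> (\<forall>u v. poly_edge P u v \<longrightarrow> c \<bullet> u \<noteq> c \<bullet> v)"

text \<open>A c-monotone path (as the list of its vertices); its length is length xs - 1.\<close>
definition mono_path :: "(real^'n) set \<Rightarrow> real^'n \<Rightarrow> (real^'n) list \<Rightarrow> bool" where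
  "mono_path P c xs \<longleftrightarrow> xs \<noteq> [] \<and> (\<forall>x\<in>set xs. vertex_of x P) \<and>
     (\<forall>i. Suc i < length xs \<longrightarrow> poly_edge P (xs ! i) (xs ! Suc i) \<and> c \<bullet> (xs ! i) < c \<bullet> (xs ! Suc i))"

definition shortest_mono_len :: "(real^'n) set \<Rightarrow> real^'n \<Rightarrow> real^'n \<Rightarrow> nat" where
  "shortest_mono_len P c v = (LEAST l. \<exists>xs. mono_path P c xs \<and> hd xs = v \<and>
       vertex_of (last xs) P \<and> (\<forall>x\<in>P. c \<bullet> x \<le> c \<bullet> last xs) \<and> length xs - 1 = l)"

definition monotone_diameter :: "(real^'n) set \<Rightarrow> nat" where
  "monotone_diameter P = Sup {shortest_mono_len P c v | c v. generic_obj P c \<and> vertex_of v P}"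

definition max_entry_norm :: "real^'n^'m \<Rightarrow> real" where
  "max_entry_norm A = Max {\<bar>A $ i $ j\<bar> | i j. True}"

end

theory Submission
  imports Defs
begin

text \<open>Induct on the dimension of a face G containing the start vertex u. If u is not
  c-optimal on G, choose a row r \<bullet> x \<le> \<beta> that is tight at u but not on all of G. By
  induction there is a short monotone path inside the proper face F = G \<inter> {r \<bullet> x = \<beta>} to
  its c-best vertex w. This w maximises c + s r on G for some s \<ge> 0, and decreasing s (the
  shadow-vertex rule) gives c-improving edges of G, each of which lowers the integer r \<bullet> x
  by at least 1. On P \<subseteq> [0,k]^n the value of r \<bullet> x varies by at most max_entry_norm A * n * k,
  so each dimension costs at most that many edges; a one-dimensional face is a single edge.
  The improving edges exist by the simplex-method fact that a non-optimal vertex of a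
  polytope has one.\<close>

lemma mono_path_singleton [simp]: "mono_path P c [x] \<longleftrightarrow> vertex_of x P"
  unfolding mono_path_def by auto

lemma mono_path_Cons_Cons [simp]:
  "mono_path P c (x # y # xs) \<longleftrightarrow>
     vertex_of x P \<and> poly_edge P x y \<and> c \<bullet> x < c \<bullet> y \<and> mono_path P c (y # xs)"
  unfolding mono_path_def by (auto simp: less_Suc_eq_0_disj)

lemma mono_path_append:
  assumes "mono_path P c xs" "mono_path P c ys" "last xs = hd ys"
  shows "mono_path P c (xs @ tl ys)"
  using assms
proof (induction xs rule: induct_list012)
  case 1
  then show ?case by (simp add: mono_path_def)
next
  case (2 x)
  then show ?case by (cases ys) (auto simp: mono_path_def)
next
  case (3 x y zs)
  then show ?case by auto
qed

lemma vertex_of_last: "mono_path P c xs \<Longrightarrow> vertex_of (last xs) P"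
  unfolding mono_path_def by auto

lemma shortest_mono_len_le:
  assumes "mono_path P c xs" "hd xs = v" "\<forall>z\<in>P. c \<bullet> z \<le> c \<bullet> last xs"
  shows "shortest_mono_len P c v \<le> length xs - 1"
  unfolding shortest_mono_len_def
  by (rule Least_le) (use assms vertex_of_last in blast)

lemma monotone_diameter_le:
  assumes "B \<ge> 0" "\<And>c v. vertex_of v P \<Longrightarrow> real (shortest_mono_len P c v) \<le> B"
  shows "real (monotone_diameter P) \<le> B"
proof -
  let ?S = "{shortest_mono_len P c v | c v. generic_obj P c \<and> vertex_of v P}"
  have "l \<le> nat \<lfloor>B\<rfloor>" if "l \<in> ?S" for l
    using that assms(2) by (auto simp: le_nat_floor)
  then have "Sup ?S \<le> nat \<lfloor>B\<rfloor>"
    by (metis (no_types, lifting) Sup_nat_empty cSup_least zero_le)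
  then have "real (Sup ?S) \<le> real (nat \<lfloor>B\<rfloor>)" by simp
  also have "\<dots> \<le> B" using assms(1) by simp
  finally show ?thesis unfolding monotone_diameter_def .
qed

section \<open>Improving edges of polytopes\<close>

lemma inner_le_if_le_on_extreme_points:
  fixes S :: "'a::euclidean_space set"
  assumes "compact S" "convex S" "\<And>z. z extreme_point_of S \<Longrightarrow> c \<bullet> z \<le> t" "y \<in> S"
  shows "c \<bullet> y \<le> t"
proof -
  have "convex hull {x. x extreme_point_of S} \<subseteq> {z. c \<bullet> z \<le> t}"
    by (rule hull_minimal) (auto simp: assms convex_halfspace_le)
  then show ?thesis using Krein_Milman_Minkowski[OF assms(1,2)] assms(4) by auto
qed

lemma extreme_point_maximizing_inner:
  fixes S :: "'a::euclidean_space set"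
  assumes "compact S" "convex S" "S \<noteq> {}"
  obtains x where "x extreme_point_of S" "\<And>z. z \<in> S \<Longrightarrow> c \<bullet> z \<le> c \<bullet> x"
proof -
  have "continuous_on S (\<lambda>z. c \<bullet> z)" by (intro continuous_intros)
  then obtain m where m: "m \<in> S" "\<And>z. z \<in> S \<Longrightarrow> c \<bullet> z \<le> c \<bullet> m"
    using continuous_attains_sup assms by metis
  define F where "F = S \<inter> {z. c \<bullet> z = c \<bullet> m}"
  have F: "F face_of S" unfolding F_def
    by (rule face_of_Int_supporting_hyperplane_le) (use assms m in auto)
  have "compact F" "convex F" "F \<noteq> {}"
    using face_of_imp_compact[OF assms(2,1) F] face_of_imp_convex[OF F] m by (auto simp: F_def)
  then obtain x where "x extreme_point_of F"
    using extreme_point_exists_convex by blast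
  then have "x extreme_point_of S" "x \<in> F" using extreme_point_of_face[OF F] by auto
  then show ?thesis using that m unfolding F_def by auto
qed

lemma segment_eq_if_aff_dim_le_1:
  fixes S :: "'a::euclidean_space set"
  assumes "compact S" "convex S" "aff_dim S \<le> 1"
    and "x extreme_point_of S" "y extreme_point_of S" "x \<noteq> y"
  shows "S = closed_segment x y"
proof -
  have "S \<noteq> {}" using assms(4) extreme_point_of_def by blast
  then obtain a b where S: "S = closed_segment a b"
    using compact_convex_collinear_segment assms(1,2,3) collinear_aff_dim by metis
  then have "x = a \<or> x = b" "y = a \<or> y = b"
    using assms(4,5) extreme_point_of_segment by blast+
  then show ?thesis using S assms(6) closed_segment_commute by metis
qed

lemma poly_edge_if_face:
  assumes "convex hull {x, y} face_of P" "x \<noteq> y"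
  shows "poly_edge P x y" "vertex_of y P"
proof -
  show "poly_edge P x y" using assms by (simp add: poly_edge_def aff_dim_convex_hull)
  have "y extreme_point_of convex hull {x, y}" by (simp add: extreme_point_of_convex_hull_2)
  then show "vertex_of y P" using assms(1) extreme_point_of_face unfolding vertex_of_def
    by blast
qed

lemma feasible_direction_step:
  fixes a :: "'i \<Rightarrow> 'a::real_inner"
  assumes "finite I" "\<forall>h\<in>I. a h \<bullet> x \<le> \<beta> h"
    and "\<forall>h\<in>I. a h \<bullet> x = \<beta> h \<longrightarrow> a h \<bullet> d \<le> 0"
  obtains \<epsilon> where "\<epsilon> > 0" "\<forall>t\<in>{0..\<epsilon>}. \<forall>h\<in>I. a h \<bullet> (x + t *\<^sub>R d) \<le> \<beta> h"
proof -
  define S where "S = insert 1 ((\<lambda>h. (\<beta> h - a h \<bullet> x) / (\<bar>a h \<bullet> d\<bar> + 1)) ` {h\<in>I. a h \<bullet> x \<noteq> \<beta> h})"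
  define \<epsilon> where "\<epsilon> = Min S"
  have fin: "finite S" using assms(1) unfolding S_def by auto
  have "\<forall>s\<in>S. s > 0"
    unfolding S_def using assms(2) by (force intro!: divide_pos_pos)
  then have "\<epsilon> > 0" unfolding \<epsilon>_def using fin by (auto simp: S_def)
  moreover have "a h \<bullet> (x + t *\<^sub>R d) \<le> \<beta> h" if h: "h \<in> I" and t: "0 \<le> t" "t \<le> \<epsilon>" for h t
  proof (cases "a h \<bullet> x = \<beta> h")
    case True
    then show ?thesis using assms(3) h t
      by (simp add: inner_add_right mult_nonneg_nonpos)
  next
    case False
    have "t \<le> (\<beta> h - a h \<bullet> x) / (\<bar>a h \<bullet> d\<bar> + 1)"
      using t unfolding \<epsilon>_def using fin h False by (auto simp: S_def)
    then have "t * (\<bar>a h \<bullet> d\<bar> + 1) \<le> \<beta> h - a h \<bullet> x"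
      by (simp add: pos_le_divide_eq add_pos_nonneg)
    moreover have "t * (a h \<bullet> d) \<le> t * (\<bar>a h \<bullet> d\<bar> + 1)"
      using t by (intro mult_left_mono) auto
    ultimately show ?thesis by (simp add: inner_add_right)
  qed
  ultimately show ?thesis using that by auto
qed

text \<open>Otherwise x is the midpoint of the feasible points x + \<epsilon> g and x - \<epsilon> g.\<close>
lemma extreme_point_tight_constraint:
  fixes a :: "'i \<Rightarrow> 'a::real_inner"
  assumes "finite I" "x extreme_point_of {w. \<forall>h\<in>I. a h \<bullet> w \<le> \<beta> h}" "g \<noteq> 0"
  obtains h where "h \<in> I" "a h \<bullet> x = \<beta> h" "a h \<bullet> g \<noteq> 0"
proof (rule ccontr)
  assume "\<not> thesis"
  then have orth: "\<forall>h\<in>I. a h \<bullet> x = \<beta> h \<longrightarrow> a h \<bullet> g = 0" using that by blast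
  have x: "\<forall>h\<in>I. a h \<bullet> x \<le> \<beta> h" using assms(2) by (simp add: extreme_point_of_def)
  have dir1: "\<forall>h\<in>I. a h \<bullet> x = \<beta> h \<longrightarrow> a h \<bullet> g \<le> 0" using orth by simp
  obtain \<epsilon>1 where "\<epsilon>1 > 0"
    and e1: "\<forall>t\<in>{0..\<epsilon>1}. \<forall>h\<in>I. a h \<bullet> (x + t *\<^sub>R g) \<le> \<beta> h"
    by (rule feasible_direction_step[OF assms(1) x dir1])
  have dir2: "\<forall>h\<in>I. a h \<bullet> x = \<beta> h \<longrightarrow> a h \<bullet> (- g) \<le> 0" using orth by simp
  obtain \<epsilon>2 where "\<epsilon>2 > 0"
    and e2: "\<forall>t\<in>{0..\<epsilon>2}. \<forall>h\<in>I. a h \<bullet> (x + t *\<^sub>R (- g)) \<le> \<beta> h"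
    by (rule feasible_direction_step[OF assms(1) x dir2])
  define \<epsilon> where "\<epsilon> = min \<epsilon>1 \<epsilon>2"
  have "\<epsilon> > 0" using \<open>\<epsilon>1 > 0\<close> \<open>\<epsilon>2 > 0\<close> by (simp add: \<epsilon>_def)
  have "x + \<epsilon> *\<^sub>R g \<in> {w. \<forall>h\<in>I. a h \<bullet> w \<le> \<beta> h}" "x - \<epsilon> *\<^sub>R g \<in> {w. \<forall>h\<in>I. a h \<bullet> w \<le> \<beta> h}"
    using e1 e2 \<open>\<epsilon> > 0\<close> by (auto simp: \<epsilon>_def)
  moreover have "x \<in> open_segment (x + \<epsilon> *\<^sub>R g) (x - \<epsilon> *\<^sub>R g)"
  proof -
    have "(x + \<epsilon> *\<^sub>R g) - (x - \<epsilon> *\<^sub>R g) = (2 * \<epsilon>) *\<^sub>R g"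
      by (simp add: algebra_simps flip: scaleR_2)
    then have "x + \<epsilon> *\<^sub>R g \<noteq> x - \<epsilon> *\<^sub>R g" using \<open>\<epsilon> > 0\<close> assms(3)
      by (metis diff_self mult_pos_pos scaleR_eq_0_iff zero_less_numeral less_irrefl)
    moreover have "midpoint (x + \<epsilon> *\<^sub>R g) (x - \<epsilon> *\<^sub>R g) = x"
      by (simp add: midpoint_eq_iff)
    ultimately show ?thesis using midpoint_in_open_segment by metis
  qed
  ultimately show False using assms(2) unfolding extreme_point_of_def by blast
qed

lemma ratio_test:
  fixes a :: "'i \<Rightarrow> 'a::real_inner"
  assumes "finite T" "\<forall>h\<in>T. a h \<bullet> u \<le> 0" "\<exists>h\<in>T. a h \<bullet> g > 0"
  obtains t j where "t \<ge> 0" "j \<in> T" "a j \<bullet> g > 0" "a j \<bullet> (u + t *\<^sub>R g) = 0"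
    "\<forall>h\<in>T. a h \<bullet> (u + t *\<^sub>R g) \<le> 0"
proof -
  define T' where "T' = {h\<in>T. a h \<bullet> g > 0}"
  define ratio where "ratio h = - (a h \<bullet> u) / (a h \<bullet> g)" for h
  define t where "t = Min (ratio ` T')"
  have T': "finite T'" "T' \<noteq> {}" using assms unfolding T'_def by auto
  then have "t \<in> ratio ` T'" unfolding t_def by (intro Min_in) auto
  then obtain j where j: "j \<in> T'" "t = ratio j" by blast
  have j_pos: "j \<in> T" "a j \<bullet> g > 0" and "a j \<bullet> u \<le> 0"
    using j(1) assms(2) unfolding T'_def by auto
  then have t_nonneg: "t \<ge> 0" unfolding j(2) ratio_def by (simp add: divide_nonpos_pos)
  have "a j \<bullet> (u + t *\<^sub>R g) = 0"
    using j_pos unfolding j(2) ratio_def by (simp add: inner_diff_right)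
  moreover have "a h \<bullet> (u + t *\<^sub>R g) \<le> 0" if "h \<in> T" for h
  proof (cases "h \<in> T'")
    case True
    then have "t \<le> ratio h" unfolding t_def using T' by simp
    then show ?thesis using True unfolding T'_def ratio_def by (simp add: inner_add_right pos_le_minus_divide_eq)
  next
    case False
    then show ?thesis using that assms(2) t_nonneg unfolding T'_def
      by (simp add: inner_add_right add_nonpos_nonpos mult_nonneg_nonpos)
  qed
  ultimately show ?thesis using that[OF t_nonneg j_pos] by blast
qed

lemma exists_orthogonal_direction:
  fixes S :: "'a::euclidean_space set"
  assumes "aff_dim S \<ge> 2" "x \<in> S" "p \<in> S" "\<phi> \<bullet> x < \<phi> \<bullet> p"
  obtains g where "g \<noteq> 0" "\<phi> \<bullet> g = 0" "\<forall>a. (\<forall>w\<in>S. a \<bullet> w = a \<bullet> x) \<longrightarrow> a \<bullet> g = 0"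
proof -
  have "\<not> S \<subseteq> affine hull {x, p}"
  proof
    assume "S \<subseteq> affine hull {x, p}"
    then have "aff_dim S \<le> aff_dim {x, p}" using aff_dim_subset aff_dim_affine_hull by metis
    then show False using assms(1) aff_dim_2[of x p] by (simp split: if_splits)
  qed
  then obtain z where z: "z \<in> S" "z \<notin> affine hull {x, p}" by blast
  have pos: "\<phi> \<bullet> (p - x) > 0" using assms(4) by (simp add: inner_diff_right)
  define lam where "lam = (\<phi> \<bullet> (z - x)) / (\<phi> \<bullet> (p - x))"
  define g where "g = (z - x) - lam *\<^sub>R (p - x)"
  have "g \<noteq> 0"
  proof
    assume "g = 0"
    then have "z = (1 - lam) *\<^sub>R x + lam *\<^sub>R p" unfolding g_def by (simp add: algebra_simps)
    then show False using z(2) unfolding affine_hull_2 by force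
  qed
  moreover have "\<phi> \<bullet> g = 0" using pos unfolding g_def lam_def by (simp add: inner_diff_right)
  moreover have "a \<bullet> g = 0" if "\<forall>w\<in>S. a \<bullet> w = a \<bullet> x" for a
    using that z(1) assms(3) by (simp add: g_def inner_diff_right)
  ultimately show ?thesis using that by blast
qed

text \<open>q = x + \<epsilon> ((p - x) + t g), where the ratio test picks t so that some constraint that is
  tight at x with a j \<bullet> g > 0 stays tight.\<close>
lemma improving_point_on_tight_constraint:
  fixes a :: "'i \<Rightarrow> 'a::real_inner"
  assumes "finite F" and G: "G = {w. \<forall>h\<in>F. a h \<bullet> w \<le> \<beta> h}"
    and "x \<in> G" "p \<in> G" "\<phi> \<bullet> x < \<phi> \<bullet> p" "\<phi> \<bullet> g = 0"
    and "h \<in> F" "a h \<bullet> x = \<beta> h" "a h \<bullet> g > 0"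
  obtains j q where "j \<in> F" "a j \<bullet> x = \<beta> j" "a j \<bullet> g > 0" "q \<in> G" "a j \<bullet> q = \<beta> j" "\<phi> \<bullet> x < \<phi> \<bullet> q"
proof -
  define T where "T = {h\<in>F. a h \<bullet> x = \<beta> h}"
  have "finite T" using assms(1) unfolding T_def by simp
  moreover have "\<forall>h\<in>T. a h \<bullet> (p - x) \<le> 0"
    using assms(4) unfolding G T_def by (auto simp: inner_diff_right)
  moreover have "\<exists>h\<in>T. a h \<bullet> g > 0" using assms(7-9) unfolding T_def by blast
  ultimately obtain t j where tj: "t \<ge> 0" "j \<in> T" "a j \<bullet> g > 0" "a j \<bullet> ((p - x) + t *\<^sub>R g) = 0"
    "\<forall>h\<in>T. a h \<bullet> ((p - x) + t *\<^sub>R g) \<le> 0"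
    by (rule ratio_test)
  define d where "d = (p - x) + t *\<^sub>R g"
  have "\<forall>h\<in>F. a h \<bullet> x \<le> \<beta> h" using assms(3) unfolding G by blast
  moreover have "\<forall>h\<in>F. a h \<bullet> x = \<beta> h \<longrightarrow> a h \<bullet> d \<le> 0" using tj(5) unfolding T_def d_def by blast
  ultimately obtain \<epsilon> where "\<epsilon> > 0" "\<forall>t\<in>{0..\<epsilon>}. \<forall>h\<in>F. a h \<bullet> (x + t *\<^sub>R d) \<le> \<beta> h"
    using feasible_direction_step[OF assms(1)] by blast
  then have "x + \<epsilon> *\<^sub>R d \<in> G" "a j \<bullet> (x + \<epsilon> *\<^sub>R d) = \<beta> j" "\<phi> \<bullet> x < \<phi> \<bullet> (x + \<epsilon> *\<^sub>R d)"
    using tj(2,4) assms(5,6) unfolding G T_def d_def by (auto simp: inner_add_right inner_diff_right)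
  then show ?thesis using that tj(2,3) unfolding T_def by blast
qed

lemma polytope_improving_proper_face:
  fixes G :: "'a::euclidean_space set"
  assumes "polytope G" "x extreme_point_of G" "p \<in> G" "\<phi> \<bullet> x < \<phi> \<bullet> p" "aff_dim G \<ge> 2"
  obtains G' q where "G' face_of G" "aff_dim G' < aff_dim G" "x \<in> G'" "q \<in> G'" "\<phi> \<bullet> x < \<phi> \<bullet> q"
proof -
  obtain F where F: "finite F" "G = \<Inter>F" "\<forall>h\<in>F. \<exists>a b. a \<noteq> 0 \<and> h = {x. a \<bullet> x \<le> b}"
    using assms(1) polytope_imp_polyhedron polyhedron_def by metis
  then obtain a \<beta> where "\<And>h. h \<in> F \<Longrightarrow> h = {w. a h \<bullet> w \<le> \<beta> h}" by metis
  then have G: "G = {w. \<forall>h\<in>F. a h \<bullet> w \<le> \<beta> h}" using F(2) by auto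
  have xG: "x \<in> G" using assms(2) extreme_point_of_def by blast
  obtain g where g: "g \<noteq> 0" "\<phi> \<bullet> g = 0" "\<forall>c. (\<forall>w\<in>G. c \<bullet> w = c \<bullet> x) \<longrightarrow> c \<bullet> g = 0"
    using exists_orthogonal_direction[OF assms(5) xG assms(3,4)] by blast
  obtain h where h: "h \<in> F" "a h \<bullet> x = \<beta> h" "a h \<bullet> g \<noteq> 0"
    using extreme_point_tight_constraint[OF F(1) assms(2)[unfolded G] g(1)] by blast
  define g' where "g' = (if a h \<bullet> g > 0 then g else - g)"
  have g': "\<phi> \<bullet> g' = 0" "a h \<bullet> g' > 0" "\<forall>c. (\<forall>w\<in>G. c \<bullet> w = c \<bullet> x) \<longrightarrow> c \<bullet> g' = 0"
    using g h(3) unfolding g'_def by auto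
  obtain j q where j: "j \<in> F" "a j \<bullet> x = \<beta> j" "a j \<bullet> g' > 0" and q: "q \<in> G" "a j \<bullet> q = \<beta> j" "\<phi> \<bullet> x < \<phi> \<bullet> q"
    by (rule improving_point_on_tight_constraint[OF F(1) G xG assms(3,4) g'(1) h(1,2) g'(2)])
  define G' where "G' = G \<inter> {w. a j \<bullet> w = \<beta> j}"
  have "G' face_of G" unfolding G'_def
    by (rule face_of_Int_supporting_hyperplane_le) (use j(1) G polytope_imp_convex[OF assms(1)] in auto)
  moreover have "G' \<noteq> G"
  proof
    assume "G' = G"
    then have "\<forall>w\<in>G. a j \<bullet> w = a j \<bullet> x" using j(2) unfolding G'_def by auto
    then have "a j \<bullet> g' = 0" using g'(3) by blast
    then show False using j(3) by simp
  qed
  then have "aff_dim G' < aff_dim G"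
    using face_of_aff_dim_lt[OF polytope_imp_convex[OF assms(1)] \<open>G' face_of G\<close>] by blast
  moreover have "x \<in> G'" "q \<in> G'" using xG q j(2) unfolding G'_def by auto
  ultimately show ?thesis using that q(3) by blast
qed

lemma polytope_improving_edge:
  fixes G :: "'a::euclidean_space set"
  assumes "polytope G" "x extreme_point_of G" "p \<in> G" "\<phi> \<bullet> x < \<phi> \<bullet> p"
  shows "\<exists>y. convex hull {x, y} face_of G \<and> x \<noteq> y \<and> \<phi> \<bullet> x < \<phi> \<bullet> y"
  using assms
proof (induction "nat (aff_dim G + 1)" arbitrary: G p rule: less_induct)
  case less
  have conv: "convex G" and comp: "compact G"
    using less.prems(1) polytope_imp_convex polytope_imp_compact by auto
  show ?case
  proof (cases "aff_dim G \<le> 1")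
    case True
    obtain y where y: "y extreme_point_of G" "\<And>z. z \<in> G \<Longrightarrow> \<phi> \<bullet> z \<le> \<phi> \<bullet> y"
      using extreme_point_maximizing_inner[OF comp conv] less.prems(3) by blast
    have "\<phi> \<bullet> x < \<phi> \<bullet> y" using y(2)[OF less.prems(3)] less.prems(4) by simp
    then have "G = convex hull {x, y}"
      using segment_eq_if_aff_dim_le_1[OF comp conv True less.prems(2) y(1)]
      by (auto simp: segment_convex_hull)
    then show ?thesis using face_of_refl[OF conv] \<open>\<phi> \<bullet> x < \<phi> \<bullet> y\<close> by auto
  next
    case False
    then have "aff_dim G \<ge> 2" by simp
    then obtain G' q where G': "G' face_of G" "aff_dim G' < aff_dim G" "x \<in> G'" "q \<in> G'"
      "\<phi> \<bullet> x < \<phi> \<bullet> q"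
      by (rule polytope_improving_proper_face[OF less.prems])
    have "nat (aff_dim G' + 1) < nat (aff_dim G + 1)" using G'(2) aff_dim_geq[of G'] by linarith
    moreover have "polytope G'" using face_of_polytope_polytope[OF less.prems(1) G'(1)] .
    moreover have "x extreme_point_of G'"
      using extreme_point_of_face[OF G'(1)] less.prems(2) G'(3) by blast
    ultimately obtain y where "convex hull {x, y} face_of G'" "x \<noteq> y" "\<phi> \<bullet> x < \<phi> \<bullet> y"
      using less.hyps G'(4,5) by blast
    then show ?thesis using face_of_trans G'(1) by blast
  qed
qed

section \<open>Shadow-vertex paths\<close>

lemma max_ratio_attained:
  fixes f g :: "'b \<Rightarrow> real"
  assumes "finite V" "\<forall>z\<in>V. g z > 0" "z1 \<in> V" "f z1 > 0"
  obtains s z where "s > 0" "z \<in> V" "f z = s * g z" "\<forall>w\<in>V. f w \<le> s * g w"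
proof -
  define s where "s = Max ((\<lambda>z. f z / g z) ` V)"
  have "s \<in> (\<lambda>z. f z / g z) ` V" unfolding s_def using assms(1,3) by (intro Max_in) auto
  then obtain z where z: "z \<in> V" "s = f z / g z" by blast
  have le: "f w / g w \<le> s" if "w \<in> V" for w unfolding s_def using assms(1) that by simp
  have "f z1 / g z1 > 0" using assms(2-4) by simp
  then have "s > 0" using le[OF assms(3)] by linarith
  moreover have "f z = s * g z" using z assms(2) by (simp add: less_imp_neq[symmetric])
  moreover have "f w \<le> s * g w" if "w \<in> V" for w
    using le[OF that] assms(2) that by (simp add: pos_divide_le_eq)
  ultimately show ?thesis using that z(1) by blast
qed

text \<open>As the weight of r is decreased from s, x stays optimal until the breakpoint s'; there the
  optimal face also contains a point that is better for c.\<close>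
lemma parametric_objective_breakpoint:
  fixes G :: "'a::euclidean_space set"
  assumes "polytope G" "x extreme_point_of G" "s \<ge> 0"
    and x_max: "\<forall>z\<in>G. (c + s *\<^sub>R r) \<bullet> z \<le> (c + s *\<^sub>R r) \<bullet> x"
    and "p \<in> G" "c \<bullet> x < c \<bullet> p"
  obtains s' z where "s' > 0" "\<forall>w\<in>G. (c + s' *\<^sub>R r) \<bullet> w \<le> (c + s' *\<^sub>R r) \<bullet> x"
    "z \<in> G" "(c + s' *\<^sub>R r) \<bullet> z = (c + s' *\<^sub>R r) \<bullet> x" "c \<bullet> x < c \<bullet> z"
proof -
  have conv: "convex G" and comp: "compact G"
    using assms(1) polytope_imp_convex polytope_imp_compact by auto
  have key: "c \<bullet> z - c \<bullet> x \<le> s * (r \<bullet> x - r \<bullet> z)" if "z \<in> G" for z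
    using x_max that by (simp add: algebra_simps)
  have "\<not> (\<forall>z. z extreme_point_of G \<longrightarrow> c \<bullet> z \<le> c \<bullet> x)"
    using inner_le_if_le_on_extreme_points[OF comp conv _ assms(5)] assms(6) by fastforce
  then obtain z1 where z1: "z1 extreme_point_of G" "c \<bullet> x < c \<bullet> z1" by auto
  define V where "V = {z. z extreme_point_of G \<and> r \<bullet> z < r \<bullet> x}"
  have "finite V"
    using finite_polyhedron_extreme_points[OF polytope_imp_polyhedron[OF assms(1)]]
    unfolding V_def by (rule rev_finite_subset) auto
  moreover have "z1 \<in> V"
  proof (rule ccontr)
    assume "z1 \<notin> V"
    then have "s * (r \<bullet> x - r \<bullet> z1) \<le> 0" using z1(1) assms(3) unfolding V_def
      by (simp add: mult_nonneg_nonpos)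
    then show False using key[of z1] z1 extreme_point_of_def by fastforce
  qed
  ultimately obtain s' z where "s' > 0" "z \<in> V" and z_eq: "c \<bullet> z - c \<bullet> x = s' * (r \<bullet> x - r \<bullet> z)"
    and le_s': "\<forall>w\<in>V. c \<bullet> w - c \<bullet> x \<le> s' * (r \<bullet> x - r \<bullet> w)"
    using max_ratio_attained[of V "\<lambda>z. r \<bullet> x - r \<bullet> z" z1 "\<lambda>z. c \<bullet> z - c \<bullet> x"] z1(2)
    unfolding V_def by auto
  have zG: "z \<in> G" and rz: "r \<bullet> x - r \<bullet> z > 0" using \<open>z \<in> V\<close> extreme_point_of_def unfolding V_def by auto
  have "s' \<le> s" using key[OF zG] z_eq rz by (simp add: mult_le_cancel_right)
  have "(c + s' *\<^sub>R r) \<bullet> w \<le> (c + s' *\<^sub>R r) \<bullet> x" if "w extreme_point_of G" for w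
  proof -
    have "c \<bullet> w - c \<bullet> x \<le> s' * (r \<bullet> x - r \<bullet> w)"
    proof (cases "w \<in> V")
      case True
      then show ?thesis using le_s' by blast
    next
      case False
      then have "s * (r \<bullet> x - r \<bullet> w) \<le> s' * (r \<bullet> x - r \<bullet> w)"
        using that unfolding V_def by (intro mult_right_mono_neg[OF \<open>s' \<le> s\<close>]) simp
      moreover have "w \<in> G" using that extreme_point_of_def by blast
      ultimately show ?thesis using key by fastforce
    qed
    then show ?thesis by (simp add: algebra_simps)
  qed
  then have "\<forall>w\<in>G. (c + s' *\<^sub>R r) \<bullet> w \<le> (c + s' *\<^sub>R r) \<bullet> x"
    using inner_le_if_le_on_extreme_points[OF comp conv] by blast
  moreover have "(c + s' *\<^sub>R r) \<bullet> z = (c + s' *\<^sub>R r) \<bullet> x"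
    using z_eq by (simp add: algebra_simps)
  moreover have "c \<bullet> x < c \<bullet> z" using z_eq mult_pos_pos[OF \<open>s' > 0\<close> rz] by linarith
  ultimately show ?thesis using that \<open>s' > 0\<close> zG by blast
qed

lemma shadow_vertex_edge:
  fixes G :: "'a::euclidean_space set"
  assumes "polytope G" "x extreme_point_of G" "s \<ge> 0"
    and "\<forall>z\<in>G. (c + s *\<^sub>R r) \<bullet> z \<le> (c + s *\<^sub>R r) \<bullet> x"
    and "p \<in> G" "c \<bullet> x < c \<bullet> p"
  obtains y s' where "convex hull {x, y} face_of G" "x \<noteq> y" "c \<bullet> x < c \<bullet> y" "r \<bullet> y < r \<bullet> x"
    "s' \<ge> 0" "\<forall>z\<in>G. (c + s' *\<^sub>R r) \<bullet> z \<le> (c + s' *\<^sub>R r) \<bullet> y"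
proof -
  obtain s' z where s': "s' > 0" "\<forall>w\<in>G. (c + s' *\<^sub>R r) \<bullet> w \<le> (c + s' *\<^sub>R r) \<bullet> x"
    and z: "z \<in> G" "(c + s' *\<^sub>R r) \<bullet> z = (c + s' *\<^sub>R r) \<bullet> x" "c \<bullet> x < c \<bullet> z"
    by (rule parametric_objective_breakpoint[OF assms])
  define F where "F = G \<inter> {w. (c + s' *\<^sub>R r) \<bullet> w = (c + s' *\<^sub>R r) \<bullet> x}"
  have F: "F face_of G" unfolding F_def
    by (rule face_of_Int_supporting_hyperplane_le) (use polytope_imp_convex[OF assms(1)] s'(2) in auto)
  have xG: "x \<in> G" using assms(2) extreme_point_of_def by blast
  have "x extreme_point_of F"
    using extreme_point_of_face[OF F] assms(2) xG unfolding F_def by blast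
  moreover have "z \<in> F" using z unfolding F_def by blast
  ultimately obtain y where y: "convex hull {x, y} face_of F" "x \<noteq> y" "c \<bullet> x < c \<bullet> y"
    using polytope_improving_edge[OF face_of_polytope_polytope[OF assms(1) F]] z(3) by blast
  have "y \<in> F" using face_of_imp_subset[OF y(1)] hull_inc[of y "{x, y}"] by blast
  then have y_eq: "(c + s' *\<^sub>R r) \<bullet> y = (c + s' *\<^sub>R r) \<bullet> x" "y \<in> G" unfolding F_def by auto
  then have "s' * (r \<bullet> y - r \<bullet> x) = - (c \<bullet> y - c \<bullet> x)" by (simp add: algebra_simps)
  then have "s' * (r \<bullet> y - r \<bullet> x) < 0" using y(3) by simp
  then have "r \<bullet> y < r \<bullet> x" using s'(1) by (simp add: mult_less_0_iff)
  moreover have "\<forall>w\<in>G. (c + s' *\<^sub>R r) \<bullet> w \<le> (c + s' *\<^sub>R r) \<bullet> y" using s'(2) y_eq(1) by simp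
  ultimately show ?thesis using that[OF face_of_trans[OF y(1) F] y(2,3) _ less_imp_le[OF s'(1)]] by blast
qed

lemma Ints_less_imp_add_one_le: "(a::real) \<in> \<int> \<Longrightarrow> b \<in> \<int> \<Longrightarrow> a < b \<Longrightarrow> a + 1 \<le> b"
  by (elim Ints_cases) simp

lemma shadow_vertex_path:
  fixes P :: "(real^'n) set"
  assumes "polytope P" "G face_of P" "\<And>z. z extreme_point_of G \<Longrightarrow> r \<bullet> z \<in> \<int>"
  shows "x extreme_point_of G \<Longrightarrow> s \<ge> 0 \<Longrightarrow> \<forall>z\<in>G. (c + s *\<^sub>R r) \<bullet> z \<le> (c + s *\<^sub>R r) \<bullet> x \<Longrightarrow>
    \<exists>xs. mono_path P c xs \<and> hd xs = x \<and> last xs \<in> G \<and> (\<forall>z\<in>G. c \<bullet> z \<le> c \<bullet> last xs) \<and>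
      real (length xs - 1) \<le> r \<bullet> x - r \<bullet> last xs"
proof (induction "card {z. z extreme_point_of G \<and> c \<bullet> x < c \<bullet> z}" arbitrary: x s rule: less_induct)
  case less
  have pG: "polytope G" using face_of_polytope_polytope[OF assms(1,2)] .
  have xG: "x \<in> G" using less.prems(1) extreme_point_of_def by blast
  have xP: "vertex_of x P"
    using extreme_point_of_face[OF assms(2)] less.prems(1) xG unfolding vertex_of_def by blast
  show ?case
  proof (cases "\<forall>z\<in>G. c \<bullet> z \<le> c \<bullet> x")
    case True
    then show ?thesis using xP xG by (intro exI[of _ "[x]"]) auto
  next
    case False
    then obtain p where "p \<in> G" "c \<bullet> x < c \<bullet> p" by force
    then obtain y s' where y: "convex hull {x, y} face_of G" "x \<noteq> y" "c \<bullet> x < c \<bullet> y" "r \<bullet> y < r \<bullet> x"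
      and s': "s' \<ge> 0" "\<forall>z\<in>G. (c + s' *\<^sub>R r) \<bullet> z \<le> (c + s' *\<^sub>R r) \<bullet> y"
      using shadow_vertex_edge[OF pG less.prems] by blast
    have edge: "poly_edge P x y" using poly_edge_if_face(1)[OF face_of_trans[OF y(1) assms(2)] y(2)] .
    have yG: "y extreme_point_of G"
      using poly_edge_if_face(2)[OF y(1,2)] unfolding vertex_of_def .
    have "r \<bullet> y + 1 \<le> r \<bullet> x"
      using Ints_less_imp_add_one_le[OF assms(3)[OF yG] assms(3)[OF less.prems(1)] y(4)] .
    have "{z. z extreme_point_of G \<and> c \<bullet> y < c \<bullet> z} \<subset> {z. z extreme_point_of G \<and> c \<bullet> x < c \<bullet> z}"
      using y(3) yG by auto
    then have "card {z. z extreme_point_of G \<and> c \<bullet> y < c \<bullet> z} < card {z. z extreme_point_of G \<and> c \<bullet> x < c \<bullet> z}"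
      by (rule psubset_card_mono[rotated])
        (use finite_polyhedron_extreme_points[OF polytope_imp_polyhedron[OF pG]] in auto)
    then obtain xs where xs: "mono_path P c xs" "hd xs = y" "last xs \<in> G" "\<forall>z\<in>G. c \<bullet> z \<le> c \<bullet> last xs"
        "real (length xs - 1) \<le> r \<bullet> y - r \<bullet> last xs"
      using less.hyps[OF _ yG s'] by blast
    then obtain ys where ys: "xs = y # ys" unfolding mono_path_def by (cases xs) auto
    have "mono_path P c (x # xs)" using xs(1) xP edge y(3) ys by simp
    moreover have "real (length (x # xs) - 1) \<le> r \<bullet> x - r \<bullet> last (x # xs)"
      using xs(5) \<open>r \<bullet> y + 1 \<le> r \<bullet> x\<close> ys by simp
    ultimately show ?thesis using xs ys by (intro exI[of _ "x # xs"]) auto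
  qed
qed

lemma exists_penalty_weight:
  fixes G :: "'a::euclidean_space set"
  assumes "polytope G" "\<forall>z\<in>G. r \<bullet> z \<le> \<beta>" "r \<bullet> w = \<beta>"
    and "\<forall>z\<in>G. r \<bullet> z = \<beta> \<longrightarrow> c \<bullet> z \<le> c \<bullet> w"
  obtains s where "s \<ge> 0" "\<forall>z\<in>G. (c + s *\<^sub>R r) \<bullet> z \<le> (c + s *\<^sub>R r) \<bullet> w"
proof -
  define V where "V = {z. z extreme_point_of G \<and> r \<bullet> z < \<beta>}"
  have "finite V"
    using finite_polyhedron_extreme_points[OF polytope_imp_polyhedron[OF assms(1)]]
    unfolding V_def by (rule rev_finite_subset) auto
  define s where "s = (\<Sum>z\<in>V. \<bar>c \<bullet> z - c \<bullet> w\<bar> / (\<beta> - r \<bullet> z))"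
  have "s \<ge> 0" unfolding s_def V_def by (intro sum_nonneg) auto
  have "(c + s *\<^sub>R r) \<bullet> z \<le> (c + s *\<^sub>R r) \<bullet> w" if "z extreme_point_of G" for z
  proof (cases "z \<in> V")
    case True
    then have pos: "\<beta> - r \<bullet> z > 0" unfolding V_def by simp
    have "\<bar>c \<bullet> z - c \<bullet> w\<bar> / (\<beta> - r \<bullet> z) \<le> s"
      unfolding s_def using \<open>finite V\<close> True by (intro member_le_sum) (auto simp: V_def)
    then have "c \<bullet> z - c \<bullet> w \<le> s * (\<beta> - r \<bullet> z)" using pos by (simp add: pos_divide_le_eq)
    then show ?thesis using assms(3) by (simp add: algebra_simps)
  next
    case False
    moreover have "z \<in> G" using that extreme_point_of_def by blast
    ultimately have "r \<bullet> z = \<beta>" using assms(2) that unfolding V_def by force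
    then show ?thesis using assms(3,4) \<open>z \<in> G\<close> by (simp add: inner_add_left)
  qed
  then have "\<forall>z\<in>G. (c + s *\<^sub>R r) \<bullet> z \<le> (c + s *\<^sub>R r) \<bullet> w"
    using inner_le_if_le_on_extreme_points polytope_imp_compact polytope_imp_convex assms(1) by blast
  with \<open>s \<ge> 0\<close> show ?thesis using that by blast
qed

section \<open>Induction on the dimension of faces\<close>

lemma mono_path_to_max_in_edge_face:
  fixes P :: "(real^'n) set"
  assumes "polytope P" "G face_of P" "aff_dim G \<le> 1"
    and "u extreme_point_of G" "p \<in> G" "c \<bullet> u < c \<bullet> p"
  obtains y where "mono_path P c [u, y]" "y \<in> G" "\<forall>z\<in>G. c \<bullet> z \<le> c \<bullet> y"
proof -
  have "polytope G" using face_of_polytope_polytope[OF assms(1,2)] .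
  then have comp: "compact G" and conv: "convex G" using polytope_imp_compact polytope_imp_convex by auto
  obtain y where y: "y extreme_point_of G" "\<And>z. z \<in> G \<Longrightarrow> c \<bullet> z \<le> c \<bullet> y"
    using extreme_point_maximizing_inner[OF comp conv] assms(5) by blast
  have "c \<bullet> u < c \<bullet> y" using y(2)[OF assms(5)] assms(6) by simp
  then have "u \<noteq> y" by auto
  then have "G = convex hull {u, y}"
    using segment_eq_if_aff_dim_le_1[OF comp conv assms(3,4) y(1)] by (simp add: segment_convex_hull)
  then have "poly_edge P u y" "vertex_of y P"
    using poly_edge_if_face[of u y P] assms(2) \<open>u \<noteq> y\<close> by simp_all
  moreover have "vertex_of u P"
    using extreme_point_of_face[OF assms(2)] assms(4) extreme_point_of_def unfolding vertex_of_def by blast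
  ultimately have "mono_path P c [u, y]" using \<open>c \<bullet> u < c \<bullet> y\<close> by simp
  then show ?thesis using that y extreme_point_of_def by blast
qed

lemma row_face_through_vertex:
  fixes a :: "'i \<Rightarrow> 'a::euclidean_space"
  assumes "finite I" and P: "P = {w. \<forall>i\<in>I. a i \<bullet> w \<le> \<beta> i}" and "G face_of P"
    and "u extreme_point_of G" "p \<in> G" "p \<noteq> u"
  obtains i where "i \<in> I" "a i \<bullet> u = \<beta> i" "G \<inter> {w. a i \<bullet> w = \<beta> i} face_of G"
    "aff_dim (G \<inter> {w. a i \<bullet> w = \<beta> i}) < aff_dim G"
proof -
  have GP: "G \<subseteq> P" using face_of_imp_subset[OF assms(3)] .
  have "u extreme_point_of P"
    using extreme_point_of_face[OF assms(3)] assms(4) extreme_point_of_def by blast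
  then obtain i where i: "i \<in> I" "a i \<bullet> u = \<beta> i" "a i \<bullet> (p - u) \<noteq> 0"
    using extreme_point_tight_constraint[OF assms(1), of u a \<beta> "p - u"] assms(6) P by auto
  have le: "\<forall>w\<in>G. a i \<bullet> w \<le> \<beta> i" using GP P i(1) by blast
  then have "a i \<bullet> p < \<beta> i" using i(2,3) assms(5) by (fastforce simp: inner_diff_right)
  have conv: "convex G" using face_of_imp_convex[OF assms(3)] .
  have "G \<inter> {w. a i \<bullet> w = \<beta> i} face_of G"
    by (rule face_of_Int_supporting_hyperplane_le) (use conv le in auto)
  moreover have "p \<notin> G \<inter> {w. a i \<bullet> w = \<beta> i}" using \<open>a i \<bullet> p < \<beta> i\<close> by simp
  then have "G \<inter> {w. a i \<bullet> w = \<beta> i} \<noteq> G" using assms(5) by blast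
  ultimately show ?thesis using that[OF i(1,2)] face_of_aff_dim_lt[OF conv] by blast
qed

text \<open>The added edges follow the shadow-vertex path of c + s r; each of them lowers the integral
  value of r by at least one, so there are at most M of them.\<close>
lemma mono_path_extend_by_shadow_vertex:
  fixes P :: "(real^'n) set"
  assumes "polytope P" "G face_of P" "\<forall>z\<in>P. r \<bullet> z \<le> \<beta>"
    and int: "\<And>z. z extreme_point_of P \<Longrightarrow> r \<bullet> z \<in> \<int>"
    and range: "\<And>z w. z \<in> P \<Longrightarrow> w \<in> P \<Longrightarrow> r \<bullet> z - r \<bullet> w \<le> M"
    and xs: "mono_path P c xs" "last xs \<in> G" "r \<bullet> last xs = \<beta>"
      "\<forall>z\<in>G. r \<bullet> z = \<beta> \<longrightarrow> c \<bullet> z \<le> c \<bullet> last xs"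
  obtains ys where "mono_path P c ys" "hd ys = hd xs" "last ys \<in> G" "\<forall>z\<in>G. c \<bullet> z \<le> c \<bullet> last ys"
    "real (length ys - 1) \<le> real (length xs - 1) + M"
proof -
  have GP: "G \<subseteq> P" using face_of_imp_subset[OF assms(2)] .
  define w where "w = last xs"
  have wG: "w extreme_point_of G"
    using extreme_point_of_face[OF assms(2)] vertex_of_last[OF xs(1)] xs(2)
    unfolding w_def vertex_of_def by blast
  obtain s where "s \<ge> 0" "\<forall>z\<in>G. (c + s *\<^sub>R r) \<bullet> z \<le> (c + s *\<^sub>R r) \<bullet> w"
    using exists_penalty_weight[OF face_of_polytope_polytope[OF assms(1,2)] _ xs(3,4)] assms(3) GP
    unfolding w_def by blast
  moreover have "r \<bullet> z \<in> \<int>" if "z extreme_point_of G" for z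
    using int extreme_point_of_face[OF assms(2)] that extreme_point_of_def by blast
  ultimately obtain xs2 where xs2: "mono_path P c xs2" "hd xs2 = w" "last xs2 \<in> G"
    "\<forall>z\<in>G. c \<bullet> z \<le> c \<bullet> last xs2" "real (length xs2 - 1) \<le> r \<bullet> w - r \<bullet> last xs2"
    using shadow_vertex_path[OF assms(1,2) _ wG] by blast
  have "real (length xs2 - 1) \<le> M" using xs2(3,5) range xs(2) GP unfolding w_def by fastforce
  moreover have "xs \<noteq> []" "xs2 \<noteq> []" using xs(1) xs2(1) mono_path_def by auto
  ultimately have "real (length (xs @ tl xs2) - 1) \<le> real (length xs - 1) + M"
    by (cases xs2) auto
  moreover have "mono_path P c (xs @ tl xs2)"
    using mono_path_append[OF xs(1) xs2(1)] xs2(2) unfolding w_def by simp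
  moreover have "last (xs @ tl xs2) = last xs2"
    using \<open>xs2 \<noteq> []\<close> xs2(2) unfolding w_def by (cases xs2) auto
  ultimately show ?thesis using that xs2(3,4) \<open>xs \<noteq> []\<close> by simp
qed

lemma mono_path_in_face_length_le:
  fixes P :: "(real^'n) set" and a :: "'i \<Rightarrow> real^'n"
  assumes "finite I" and P: "P = {w. \<forall>i\<in>I. a i \<bullet> w \<le> \<beta> i}" and "polytope P" and "M \<ge> 0"
    and int: "\<And>i v. i \<in> I \<Longrightarrow> v extreme_point_of P \<Longrightarrow> a i \<bullet> v \<in> \<int>"
    and range: "\<And>i z w. i \<in> I \<Longrightarrow> z \<in> P \<Longrightarrow> w \<in> P \<Longrightarrow> a i \<bullet> z - a i \<bullet> w \<le> M"
  shows "G face_of P \<Longrightarrow> aff_dim G = int e \<Longrightarrow> u extreme_point_of G \<Longrightarrow>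
    \<exists>xs. mono_path P c xs \<and> hd xs = u \<and> last xs \<in> G \<and> (\<forall>z\<in>G. c \<bullet> z \<le> c \<bullet> last xs) \<and>
      real (length xs - 1) \<le> real (e - 1) * M + 1"
proof (induction e arbitrary: G u rule: less_induct)
  case (less e)
  have uG: "u \<in> G" using less.prems(3) extreme_point_of_def by blast
  show ?case
  proof (cases "\<forall>z\<in>G. c \<bullet> z \<le> c \<bullet> u")
    case True
    have "vertex_of u P"
      using extreme_point_of_face[OF less.prems(1)] less.prems(3) uG unfolding vertex_of_def by blast
    then show ?thesis using True uG \<open>M \<ge> 0\<close> by (intro exI[of _ "[u]"]) auto
  next
    case False
    then obtain p where p: "p \<in> G" "c \<bullet> u < c \<bullet> p" by force
    show ?thesis
    proof (cases "e \<le> 1")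
      case True
      then obtain y where "mono_path P c [u, y]" "y \<in> G" "\<forall>z\<in>G. c \<bullet> z \<le> c \<bullet> y"
        using mono_path_to_max_in_edge_face[OF assms(3) less.prems(1) _ less.prems(3) p] less.prems(2)
        by auto
      then show ?thesis using \<open>M \<ge> 0\<close> by (intro exI[of _ "[u, y]"]) auto
    next
      case False
      obtain i where i: "i \<in> I" "a i \<bullet> u = \<beta> i" and F: "G \<inter> {w. a i \<bullet> w = \<beta> i} face_of G"
        "aff_dim (G \<inter> {w. a i \<bullet> w = \<beta> i}) < aff_dim G"
        using row_face_through_vertex[OF assms(1) P less.prems(1,3) p(1)] p(2) by blast
      let ?F = "G \<inter> {w. a i \<bullet> w = \<beta> i}"
      have "u \<in> ?F" using uG i(2) by simp
      then have "aff_dim ?F \<ge> 0" using aff_dim_geq[of ?F] aff_dim_empty[of ?F] by force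
      then obtain e' where e': "e' < e" "aff_dim ?F = int e'"
        using F(2) less.prems(2) by (metis nonneg_int_cases of_nat_less_iff)
      obtain xs where xs: "mono_path P c xs" "hd xs = u" "last xs \<in> ?F" "\<forall>z\<in>?F. c \<bullet> z \<le> c \<bullet> last xs"
        "real (length xs - 1) \<le> real (e' - 1) * M + 1"
        using less.IH[OF e'(1) face_of_trans[OF F(1) less.prems(1)] e'(2)]
          extreme_point_of_face[OF F(1)] less.prems(3) \<open>u \<in> ?F\<close> by blast
      have "\<forall>z\<in>P. a i \<bullet> z \<le> \<beta> i" using P i(1) by blast
      then obtain ys where ys: "mono_path P c ys" "hd ys = u" "last ys \<in> G" "\<forall>z\<in>G. c \<bullet> z \<le> c \<bullet> last ys"
        "real (length ys - 1) \<le> real (length xs - 1) + M"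
        using mono_path_extend_by_shadow_vertex[OF assms(3) less.prems(1) _ int[OF i(1)] range[OF i(1)]
            xs(1)] xs(2-4) by auto
      have "real (e' - 1) * M + 1 + M \<le> real (e - 1) * M + 1"
        using e'(1) False \<open>M \<ge> 0\<close> mult_right_mono[of "real (e' - 1) + 1" "real (e - 1)" M]
        by (simp add: algebra_simps)
      then show ?thesis using ys xs(5) by (intro exI[of _ ys]) auto
    qed
  qed
qed

lemma polytope_bounded_constraint_system:
  fixes a :: "'i \<Rightarrow> 'a::euclidean_space"
  assumes "finite I" "bounded {w. \<forall>i\<in>I. a i \<bullet> w \<le> \<beta> i}"
  shows "polytope {w. \<forall>i\<in>I. a i \<bullet> w \<le> \<beta> i}"
proof -
  have "{w. \<forall>i\<in>I. a i \<bullet> w \<le> \<beta> i} = \<Inter> ((\<lambda>i. {w. a i \<bullet> w \<le> \<beta> i}) ` I)" by auto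
  then have "polyhedron {w. \<forall>i\<in>I. a i \<bullet> w \<le> \<beta> i}"
    using assms(1) by (auto intro!: polyhedron_halfspace_le)
  then show ?thesis using assms(2) by (simp add: polytope_eq_bounded_polyhedron)
qed

lemma abs_entry_le_max_entry_norm: "\<bar>A $ i $ j\<bar> \<le> max_entry_norm A"
proof -
  have "{\<bar>A $ i $ j\<bar> | i j. True} = (\<lambda>(i, j). \<bar>A $ i $ j\<bar>) ` UNIV" by auto
  then have "finite {\<bar>A $ i $ j\<bar> | i j. True}" by simp
  then show ?thesis unfolding max_entry_norm_def by (intro Max_ge) auto
qed

lemma max_entry_norm_nonneg: "0 \<le> max_entry_norm A"
  using abs_entry_le_max_entry_norm[of A] abs_ge_zero order_trans by blast

lemma inner_diff_le_on_cube:
  fixes a z w :: "real^'n"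
  assumes "\<And>j. \<bar>a $ j\<bar> \<le> N"
    and "\<And>j. 0 \<le> z $ j \<and> z $ j \<le> k" "\<And>j. 0 \<le> w $ j \<and> w $ j \<le> k"
  shows "a \<bullet> z - a \<bullet> w \<le> N * real CARD('n) * k"
proof -
  have "a \<bullet> z - a \<bullet> w = (\<Sum>j\<in>UNIV. a $ j * (z $ j - w $ j))"
    by (simp add: inner_vec_def sum_subtractf algebra_simps)
  also have "\<dots> \<le> (\<Sum>j\<in>(UNIV::'n set). N * k)"
  proof (rule sum_mono)
    fix j
    have "\<bar>z $ j - w $ j\<bar> \<le> k" using assms(2,3)[of j] by linarith
    then have "\<bar>a $ j\<bar> * \<bar>z $ j - w $ j\<bar> \<le> N * k"
      using assms(1)[of j] by (intro mult_mono) auto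
    then show "a $ j * (z $ j - w $ j) \<le> N * k" by (metis abs_ge_self abs_mult order_trans)
  qed
  finally show ?thesis by (simp add: mult_ac)
qed

lemma Ints_inner: "(\<And>j. a $ j \<in> \<int>) \<Longrightarrow> (\<And>j. v $ j \<in> \<int>) \<Longrightarrow> (a::real^'n) \<bullet> v \<in> \<int>"
  unfolding inner_vec_def by (intro Ints_sum Ints_mult) auto

theorem mainTheorem4:
  fixes A :: "real^'n^'m" and b :: "real^'m" and P :: "(real^'n) set" and k d :: nat
  assumes A_int: "\<forall>i j. A $ i $ j \<in> \<int>"
    and P_def: "P = {x. \<forall>i. (A *v x) $ i \<le> b $ i}"
    and cube: "P \<subseteq> {x. \<forall>j. 0 \<le> x $ j \<and> x $ j \<le> real k}"
    and lattice: "\<forall>v. vertex_of v P \<longrightarrow> (\<forall>j. v $ j \<in> \<int>)"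
    and dim: "aff_dim P = int d"
  shows "real (monotone_diameter P) \<le> real (d - 1) * max_entry_norm A * real CARD('n) * real k + 1"
proof -
  define M where "M = max_entry_norm A * real CARD('n) * real k"
  have "M \<ge> 0" unfolding M_def using max_entry_norm_nonneg[of A] by simp
  have rows: "P = {w. \<forall>i\<in>UNIV. A $ i \<bullet> w \<le> b $ i}"
    using P_def by (simp add: matrix_vector_mul_component)
  have "P \<subseteq> cbox 0 (\<chi> j. real k)" using cube by (auto simp: mem_box_cart)
  then have "bounded P" using bounded_cbox bounded_subset by blast
  then have "polytope P"
    using polytope_bounded_constraint_system[OF finite_class.finite_UNIV, of "($) A" "($) b"] rows by simp
  then have "P face_of P" using face_of_refl polytope_imp_convex by blast
  have int: "A $ i \<bullet> v \<in> \<int>" if "v extreme_point_of P" for i v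
    using that A_int lattice by (intro Ints_inner) (auto simp: vertex_of_def)
  have range: "A $ i \<bullet> z - A $ i \<bullet> w \<le> M" if "z \<in> P" "w \<in> P" for i z w
    unfolding M_def using that cube abs_entry_le_max_entry_norm by (intro inner_diff_le_on_cube) auto
  have "real (shortest_mono_len P c v) \<le> real (d - 1) * M + 1" if "vertex_of v P" for c v
  proof -
    have "\<exists>xs. mono_path P c xs \<and> hd xs = v \<and> last xs \<in> P \<and> (\<forall>z\<in>P. c \<bullet> z \<le> c \<bullet> last xs) \<and>
        real (length xs - 1) \<le> real (d - 1) * M + 1"
      using that unfolding vertex_of_def
      by (intro mono_path_in_face_length_le[OF finite_class.finite_UNIV rows \<open>polytope P\<close> \<open>M \<ge> 0\<close> _ _
            \<open>P face_of P\<close> dim]) (auto intro: int range)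
    then obtain xs where "mono_path P c xs" "hd xs = v" "\<forall>z\<in>P. c \<bullet> z \<le> c \<bullet> last xs"
      "real (length xs - 1) \<le> real (d - 1) * M + 1" by blast
    then show ?thesis using shortest_mono_len_le[of P c xs v] by linarith
  qed
  then have "real (monotone_diameter P) \<le> real (d - 1) * M + 1"
    using \<open>M \<ge> 0\<close> by (intro monotone_diameter_le) auto
  then show ?thesis unfolding M_def by (simp add: mult.assoc)
qed

end
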